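(* $\pi(e_{n,1}^{(n)})=\pi(z)$ and $\pi(f_{n,1}^{(n)})=\pi(H_0)$.
   Context: Let $\mathfrak g=Q(n)$ with even basis $e_{i,j}$, odd basis $f_{i,j}$, $z=\sum_ie_{i,i}$, $H_0=\sum_{i=1}^{n}(-1)^{i-1}f_{i,i}$. Let $\chi(x)=\mathrm{otr}(xE)$ with $E=\sum_{i=1}^{n-1}f_{i,i+1}$, $\mathfrak m$ spanned by $e_{i,j},f_{i,j}$ ($i>j$), $\chi(e_{i+1,i})=1$ and $\chi=0$ on the other basis vectors of $\mathfrak m$, $I_\chi$ the left ideal of $U(\mathfrak g)$ generated by $a-\chi(a)$ ($a\in\mathfrak m$), and $\pi:U(\mathfrak g)\to U(\mathfrak g)/I_\chi$ the projection. Sergeev's elements: $e_{i,j}^{(1)}=e_{i,j}$, $f_{i,j}^{(1)}=f_{i,j}$, $e_{i,j}^{(m)}=\sum_k e_{i,k}e_{k,j}^{(m-1)}+(-1)^{m+1}\sum_k f_{i,k}f_{k,j}^{(m-1)}$, $f_{i,j}^{(m)}=\sum_k e_{i,k}f_{k,j}^{(m-1)}+(-1)^{m+1}\sum_k f_{i,k}e_{k,j}^{(m-1)}$. *)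

theory Defs
  imports Complex_Main "HOL-Library.Function_Algebras"
begin

(* Generators of Q(n): E i j = e_{i,j} (even), F i j = f_{i,j} (odd). *)
datatype qgen = E nat nat | F nat nat

fun qodd :: "qgen \<Rightarrow> bool" where
  "qodd (E i j) = False" | "qodd (F i j) = True"

definition qbasis :: "nat \<Rightarrow> qgen set" where
  "qbasis n = {E i j | i j. 1 \<le> i \<and> i \<le> n \<and> 1 \<le> j \<and> j \<le> n}
            \<union> {F i j | i j. 1 \<le> i \<and> i \<le> n \<and> 1 \<le> j \<and> j \<le> n}"

(* Tensor algebra T(Q(n)) over C: noncommutative polynomials, represented as
   coefficient functions on words; addition/subtraction are pointwise
   (Function_Algebras), multiplication is concatenation-convolution tmul. *)
type_synonym talg = "qgen list \<Rightarrow> complex"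

definition tmul :: "talg \<Rightarrow> talg \<Rightarrow> talg" (infixl "\<otimes>" 70) where
  "p \<otimes> q = (\<lambda>w. \<Sum>k\<le>length w. p (take k w) * q (drop k w))"

definition tsc :: "complex \<Rightarrow> talg \<Rightarrow> talg" where
  "tsc c p = (\<lambda>w. c * p w)"

definition mono :: "qgen list \<Rightarrow> talg" where
  "mono u = (\<lambda>w. if w = u then 1 else 0)"

definition gen :: "qgen \<Rightarrow> talg" where
  "gen x = mono [x]"

fun qbr :: "qgen \<Rightarrow> qgen \<Rightarrow> talg" where
  "qbr (E i j) (E k l) = (if j = k then gen (E i l) else 0) - (if l = i then gen (E k j) else 0)"
| "qbr (E i j) (F k l) = (if j = k then gen (F i l) else 0) - (if l = i then gen (F k j) else 0)"
| "qbr (F i j) (E k l) = (if j = k then gen (F i l) else 0) - (if l = i then gen (F k j) else 0)"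
| "qbr (F i j) (F k l) = (if j = k then gen (E i l) else 0) + (if l = i then gen (E k j) else 0)"

definition qrel :: "qgen \<Rightarrow> qgen \<Rightarrow> talg" where
  "qrel x y = gen x \<otimes> gen y
     - tsc (if qodd x \<and> qodd y then -1 else 1) (gen y \<otimes> gen x) - qbr x y"

definition mbasis :: "nat \<Rightarrow> qgen set" where
  "mbasis n = {E i j | i j. 1 \<le> j \<and> j < i \<and> i \<le> n}
            \<union> {F i j | i j. 1 \<le> j \<and> j < i \<and> i \<le> n}"

fun chi :: "qgen \<Rightarrow> complex" where
  "chi (E i j) = (if i = j + 1 then 1 else 0)"
| "chi (F i j) = 0"

(* Preimage in T(Q(n)) of I_chi: the two-sided ideal of defining relations of
   U(Q(n)) plus the left ideal generated by a - chi(a), a in m. *)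
inductive_set kideal :: "nat \<Rightarrow> talg set" for n where
  zero: "0 \<in> kideal n"
| rel: "\<lbrakk>x \<in> qbasis n; y \<in> qbasis n; set u \<subseteq> qbasis n; set v \<subseteq> qbasis n\<rbrakk>
        \<Longrightarrow> mono u \<otimes> qrel x y \<otimes> mono v \<in> kideal n"
| lft: "\<lbrakk>a \<in> mbasis n; set u \<subseteq> qbasis n\<rbrakk>
        \<Longrightarrow> mono u \<otimes> (gen a - tsc (chi a) (mono [])) \<in> kideal n"
| add: "\<lbrakk>p \<in> kideal n; q \<in> kideal n\<rbrakk> \<Longrightarrow> p + q \<in> kideal n"
| smul: "p \<in> kideal n \<Longrightarrow> tsc c p \<in> kideal n"

(* pi(p) = pi(q) in U(g)/I_chi *)
definition pi_eq :: "nat \<Rightarrow> talg \<Rightarrow> talg \<Rightarrow> bool" where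
  "pi_eq n p q \<longleftrightarrow> p - q \<in> kideal n"

(* Sergeev's elements: ser n m x = x^{(m)}, sums over k = 1..n *)
fun ser :: "nat \<Rightarrow> nat \<Rightarrow> qgen \<Rightarrow> talg" where
  "ser n 0 x = 0"
| "ser n (Suc 0) x = gen x"
| "ser n (Suc (Suc m)) (E i j) =
     (\<Sum>k=1..n. gen (E i k) \<otimes> ser n (Suc m) (E k j))
     + tsc ((-1) ^ (Suc (Suc m) + 1)) (\<Sum>k=1..n. gen (F i k) \<otimes> ser n (Suc m) (F k j))"
| "ser n (Suc (Suc m)) (F i j) =
     (\<Sum>k=1..n. gen (E i k) \<otimes> ser n (Suc m) (F k j))
     + tsc ((-1) ^ (Suc (Suc m) + 1)) (\<Sum>k=1..n. gen (F i k) \<otimes> ser n (Suc m) (E k j))"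

definition zel :: "nat \<Rightarrow> talg" where
  "zel n = (\<Sum>i=1..n. gen (E i i))"

definition H0 :: "nat \<Rightarrow> talg" where
  "H0 n = (\<Sum>i=1..n. tsc ((-1) ^ (i - 1)) (gen (F i i)))"

end

theory Submission
  imports Defs
begin

text \<open>
  Write X(m)_cd for a Sergeev element of either parity and X'(m)_cd for the one of the
  opposite parity. By induction on m along the recursion, already in U(Q(n)) the
  supercommutator of a generator x_ab with X(m)_cd is \<plusminus>\<delta>_bc X(m)_ad or \<plusminus>\<delta>_bc X'(m)_ad
  whenever a \<noteq> d. Modulo I_\<chi>, a generator x_ik with k < i standing at the right end acts
  by \<chi>. Now expand X(m+1)_i1 = \<Sum>_k e_ik X(m)_k1 \<plusminus> \<Sum>_k f_ik X'(m)_k1. For k < i, moving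
  e_ik and f_ik to the right produces two commutator terms \<plusminus>X(m)_i1 which cancel, and \<chi>
  leaves only X(m)_(i-1)1. For k \<ge> i induction on m applies, since modulo I_\<chi> the element
  X(m)_k1 with k \<ge> m is known: it is \<Sum>_(j\<le>m) e_jj resp. \<Sum>_(j\<le>m) (-1)^(j-1) f_jj for k = m,
  the unit (even case only) for k = m + 1, and 0 beyond. The theorem is the case k = m = n.
\<close>

section \<open>The tensor algebra\<close>

lemma lambda_plus_eq [simp]: "(\<lambda>w. (p::talg) w + q w) = p + q"
  by (simp add: fun_eq_iff)

lemma lambda_minus_eq [simp]: "(\<lambda>w. (p::talg) w - q w) = p - q"
  by (simp add: fun_eq_iff)

lemma lambda_uminus_eq [simp]: "(\<lambda>w. - (p::talg) w) = - p"
  by (simp add: fun_eq_iff)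

lemma lambda_zero_eq [simp]: "(\<lambda>w. 0) = (0::talg)"
  by (simp add: fun_eq_iff)

lemma tmul_add_left: "(p + q) \<otimes> r = p \<otimes> r + q \<otimes> r"
  by (simp add: tmul_def fun_eq_iff distrib_right sum.distrib)

lemma tmul_add_right: "r \<otimes> (p + q) = r \<otimes> p + r \<otimes> q"
  by (simp add: tmul_def fun_eq_iff distrib_left sum.distrib)

lemma tmul_zero_left [simp]: "0 \<otimes> r = 0"
  by (simp add: tmul_def fun_eq_iff)

lemma tmul_zero_right [simp]: "r \<otimes> 0 = 0"
  by (simp add: tmul_def fun_eq_iff)

lemma tmul_uminus_left: "(- p) \<otimes> r = - (p \<otimes> r)"
  by (simp add: tmul_def fun_eq_iff sum_negf)

lemma tmul_uminus_right: "r \<otimes> (- p) = - (r \<otimes> p)"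
  by (simp add: tmul_def fun_eq_iff sum_negf)

lemma tmul_diff_left: "(p - q) \<otimes> r = p \<otimes> r - q \<otimes> r"
  by (simp add: tmul_def fun_eq_iff left_diff_distrib sum_subtractf)

lemma tmul_diff_right: "r \<otimes> (p - q) = r \<otimes> p - r \<otimes> q"
  by (simp add: tmul_def fun_eq_iff right_diff_distrib sum_subtractf)

lemma tmul_sum_left: "(\<Sum>i\<in>A. f i) \<otimes> r = (\<Sum>i\<in>A. f i \<otimes> r)"
  by (induct A rule: infinite_finite_induct) (simp_all add: tmul_add_left)

lemma tmul_sum_right: "r \<otimes> (\<Sum>i\<in>A. f i) = (\<Sum>i\<in>A. r \<otimes> f i)"
  by (induct A rule: infinite_finite_induct) (simp_all add: tmul_add_right)

lemma tmul_tsc_left: "tsc c p \<otimes> q = tsc c (p \<otimes> q)"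
  by (simp add: tmul_def tsc_def fun_eq_iff sum_distrib_left mult.assoc)

lemma tmul_tsc_right: "p \<otimes> tsc c q = tsc c (p \<otimes> q)"
  by (simp add: tmul_def tsc_def fun_eq_iff sum_distrib_left mult.left_commute)

lemma tsc_1 [simp]: "tsc 1 p = p"
  by (simp add: tsc_def)

lemma tsc_minus_1 [simp]: "tsc (-1) p = - p"
  by (simp add: tsc_def fun_eq_iff)

lemma mono_tmul_apply:
  "(mono u \<otimes> q) w = (if take (length u) w = u then q (drop (length u) w) else 0)"
proof -
  have "(mono u \<otimes> q) w = (\<Sum>k\<le>length w. if k = length u
          then (if take (length u) w = u then q (drop (length u) w) else 0) else 0)"
    unfolding tmul_def mono_def by (rule sum.cong) auto
  then show ?thesis
    by (auto simp: sum.delta)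
qed

lemma mono_Nil_tmul [simp]: "mono [] \<otimes> q = q"
  by (simp add: fun_eq_iff mono_tmul_apply)

lemma tmul_mono_Nil [simp]: "q \<otimes> mono [] = q"
proof -
  have "(q \<otimes> mono []) w = (\<Sum>k\<le>length w. if k = length w then q w else 0)" for w
    unfolding tmul_def mono_def by (rule sum.cong) auto
  then show ?thesis
    by auto
qed

lemma gen_tmul_mono: "gen x \<otimes> mono u = mono (x # u)"
proof (rule ext)
  fix w
  show "(gen x \<otimes> mono u) w = mono (x # u) w"
    unfolding gen_def mono_tmul_apply by (cases w) (auto simp: mono_def)
qed

lemma gen_tmul_assoc: "gen x \<otimes> (p \<otimes> r) = (gen x \<otimes> p) \<otimes> r"
proof (rule ext)
  fix w
  show "(gen x \<otimes> (p \<otimes> r)) w = ((gen x \<otimes> p) \<otimes> r) w"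
  proof (cases w)
    case Nil
    then show ?thesis
      by (simp add: gen_def tmul_def mono_def)
  next
    case (Cons y w')
    have "((gen x \<otimes> p) \<otimes> r) w
        = (\<Sum>k\<le>Suc (length w'). (gen x \<otimes> p) (take k (y # w')) * r (drop k (y # w')))"
      using Cons by (simp add: tmul_def)
    also have "\<dots> = (gen x \<otimes> p) [] * r w
        + (\<Sum>j\<le>length w'. (gen x \<otimes> p) (y # take j w') * r (drop j w'))"
      using Cons by (subst sum.atMost_Suc_shift) simp
    also have "\<dots> = (\<Sum>j\<le>length w'. (if y = x then p (take j w') else 0) * r (drop j w'))"
      by (simp add: gen_def mono_tmul_apply cong: if_cong)
    also have "\<dots> = (gen x \<otimes> (p \<otimes> r)) w"
      using Cons unfolding gen_def mono_tmul_apply by (simp add: tmul_def)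
    finally show ?thesis
      by simp
  qed
qed

definition neg_if :: "bool \<Rightarrow> talg \<Rightarrow> talg" where
  "neg_if b p = (if b then - p else p)"

lemma neg_if_simps [simp]: "neg_if False p = p" "neg_if True p = - p"
  by (simp_all add: neg_if_def)

lemma neg_if_0 [simp]: "neg_if b 0 = 0"
  by (simp add: neg_if_def)

lemma neg_if_add: "neg_if b (p + q) = neg_if b p + neg_if b q"
  by (simp add: neg_if_def)

lemma neg_if_if_0: "neg_if b (if P then p else 0) = (if P then neg_if b p else 0)"
  by simp

lemma neg_if_sum: "(\<Sum>k\<in>S. neg_if b (f k)) = neg_if b (\<Sum>k\<in>S. f k)"
  by (cases b) (simp_all add: sum_negf)

lemma tmul_neg_if_left: "neg_if b p \<otimes> q = neg_if b (p \<otimes> q)"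
  by (cases b) (simp_all add: tmul_uminus_left)

lemma tmul_neg_if_right: "q \<otimes> neg_if b p = neg_if b (q \<otimes> p)"
  by (cases b) (simp_all add: tmul_uminus_right)

lemma tsc_minus_one_power: "tsc ((-1) ^ k) p = neg_if (odd k) p"
  by (cases "even k") (simp_all add: fun_eq_iff tsc_def)

text \<open>The parity flag of \<open>qg\<close> is \<open>True\<close> for odd generators, so the sign (-1)^(|x||y|) becomes \<open>neg_if (u \<and> v)\<close>.\<close>

fun qg :: "bool \<Rightarrow> nat \<Rightarrow> nat \<Rightarrow> qgen" where
  "qg False i j = E i j"
| "qg True i j = F i j"

lemma qg_in_qbasis [simp]: "qg t i j \<in> qbasis n \<longleftrightarrow> 1 \<le> i \<and> i \<le> n \<and> 1 \<le> j \<and> j \<le> n"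
  by (cases t) (auto simp: qbasis_def)

lemma qg_in_mbasis [simp]: "qg t i j \<in> mbasis n \<longleftrightarrow> 1 \<le> j \<and> j < i \<and> i \<le> n"
  by (cases t) (auto simp: mbasis_def)

lemma chi_qg: "chi (qg t i k) = (if \<not> t \<and> i = k + 1 then 1 else 0)"
  by (cases t) auto

lemma E_F_in_qbasis [simp]:
  "E i j \<in> qbasis n \<longleftrightarrow> 1 \<le> i \<and> i \<le> n \<and> 1 \<le> j \<and> j \<le> n"
  "F i j \<in> qbasis n \<longleftrightarrow> 1 \<le> i \<and> i \<le> n \<and> 1 \<le> j \<and> j \<le> n"
  by (auto simp: qbasis_def)

lemma gen_tmul_gen_eq_qrel:
  "gen (qg u a b) \<otimes> gen (qg v c k) = qrel (qg u a b) (qg v c k)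
     + neg_if (u \<and> v) (gen (qg v c k) \<otimes> gen (qg u a b))
     + (if b = c then gen (qg (u \<noteq> v) a k) else 0)
     + (if k = a then neg_if (\<not> (u \<and> v)) (gen (qg (u \<noteq> v) c b)) else 0)"
  by (cases u; cases v) (simp_all add: qrel_def)

lemma ser_Suc_qg:
  assumes "1 \<le> m"
  shows "ser n (Suc m) (qg t c d) = (\<Sum>k=1..n. gen (qg False c k) \<otimes> ser n m (qg t k d))
     + neg_if (odd m) (\<Sum>k=1..n. gen (qg True c k) \<otimes> ser n m (qg (\<not> t) k d))"
proof -
  obtain m' where "m = Suc m'"
    using assms by (cases m) auto
  then show ?thesis
    by (cases t) (simp_all add: tsc_minus_one_power tsc_def fun_eq_iff neg_if_def)
qed

section \<open>Words over the basis and the ideal \<open>I\<^sub>\<chi>\<close>\<close>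

text \<open>
  The relations of \<open>kideal\<close> are only available sandwiched between words over \<open>qbasis n\<close>,
  so closure properties need the other factor to lie in their span.
\<close>

inductive_set word_span :: "nat \<Rightarrow> talg set" for n where
  mono: "set u \<subseteq> qbasis n \<Longrightarrow> mono u \<in> word_span n"
| zero: "0 \<in> word_span n"
| add: "p \<in> word_span n \<Longrightarrow> q \<in> word_span n \<Longrightarrow> p + q \<in> word_span n"
| uminus: "p \<in> word_span n \<Longrightarrow> - p \<in> word_span n"

lemma word_span_neg_if: "p \<in> word_span n \<Longrightarrow> neg_if b p \<in> word_span n"
  by (cases b) (simp_all add: word_span.uminus)

lemma word_span_sum: "(\<And>i. i \<in> A \<Longrightarrow> f i \<in> word_span n) \<Longrightarrow> (\<Sum>i\<in>A. f i) \<in> word_span n"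
  by (induct A rule: infinite_finite_induct) (auto intro: word_span.zero word_span.add)

lemma gen_in_word_span: "x \<in> qbasis n \<Longrightarrow> gen x \<in> word_span n"
  unfolding gen_def by (rule word_span.mono) simp

lemma gen_tmul_in_word_span:
  assumes "x \<in> qbasis n" "p \<in> word_span n"
  shows "gen x \<otimes> p \<in> word_span n"
  using assms(2)
  by induct (use assms(1) in \<open>simp_all add: gen_tmul_mono tmul_add_right tmul_uminus_right
    word_span.mono word_span.zero word_span.add word_span.uminus\<close>)

lemma ser_in_word_span: "1 \<le> m \<Longrightarrow> qg t c d \<in> qbasis n \<Longrightarrow> ser n m (qg t c d) \<in> word_span n"
proof (induct m arbitrary: t c rule: nat_induct_at_least)
  case base
  then show ?case
    by (simp add: gen_in_word_span)
next
  case (Suc m)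
  then show ?case
    unfolding ser_Suc_qg[OF Suc(1)]
    by (intro word_span.add word_span_neg_if word_span_sum gen_tmul_in_word_span) auto
qed

lemma kideal_uminus: "p \<in> kideal n \<Longrightarrow> - p \<in> kideal n"
  using kideal.smul[of p n "-1"] by simp

lemma kideal_neg_if: "p \<in> kideal n \<Longrightarrow> neg_if b p \<in> kideal n"
  by (cases b) (simp_all add: kideal_uminus)

lemma kideal_sum: "(\<And>i. i \<in> A \<Longrightarrow> f i \<in> kideal n) \<Longrightarrow> (\<Sum>i\<in>A. f i) \<in> kideal n"
  by (induct A rule: infinite_finite_induct) (auto intro: kideal.zero kideal.add)

lemma gen_tmul_in_kideal:
  assumes "x \<in> qbasis n" "p \<in> kideal n"
  shows "gen x \<otimes> p \<in> kideal n"
  using assms(2)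
proof induct
  case (rel a b u v)
  then show ?case
    using assms(1) kideal.rel[of a n b "x # u" v] by (simp add: gen_tmul_assoc gen_tmul_mono)
next
  case (lft a u)
  then show ?case
    using assms(1) kideal.lft[of a n "x # u"] by (simp add: gen_tmul_assoc gen_tmul_mono)
qed (simp_all add: kideal.zero kideal.add kideal.smul tmul_add_right tmul_tsc_right)

lemma qrel_tmul_in_kideal:
  assumes "x \<in> qbasis n" "y \<in> qbasis n" "W \<in> word_span n"
  shows "qrel x y \<otimes> W \<in> kideal n"
  using assms(3)
proof induct
  case (mono v)
  then show ?case
    using assms kideal.rel[of x n y "[]" v] by simp
qed (simp_all add: kideal.zero kideal.add kideal_uminus tmul_add_right tmul_uminus_right)

lemma tmul_gen_minus_chi_in_kideal:
  assumes "a \<in> mbasis n" "W \<in> word_span n"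
  shows "W \<otimes> gen a - tsc (chi a) W \<in> kideal n"
  using assms(2)
proof induct
  case (mono u)
  then show ?case
    using kideal.lft[OF assms(1) mono] by (simp add: tmul_diff_right tmul_tsc_right)
next
  case zero
  then show ?case
    by (simp add: kideal.zero tsc_def)
next
  case (add p q)
  have "(p + q) \<otimes> gen a - tsc (chi a) (p + q)
      = (p \<otimes> gen a - tsc (chi a) p) + (q \<otimes> gen a - tsc (chi a) q)"
    by (simp add: tmul_add_left tsc_def fun_eq_iff algebra_simps)
  then show ?case
    using add kideal.add by metis
next
  case (uminus p)
  have "(- p) \<otimes> gen a - tsc (chi a) (- p) = - (p \<otimes> gen a - tsc (chi a) p)"
    by (simp add: tmul_uminus_left tsc_def fun_eq_iff algebra_simps)
  then show ?case
    using uminus kideal_uminus by metis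
qed

lemma pi_eq_refl [simp]: "pi_eq n p p"
  by (simp add: pi_eq_def kideal.zero)

lemma pi_eq_trans: "pi_eq n p q \<Longrightarrow> pi_eq n q r \<Longrightarrow> pi_eq n p r"
  unfolding pi_eq_def using kideal.add by fastforce

lemma pi_eq_add: "pi_eq n p q \<Longrightarrow> pi_eq n p' q' \<Longrightarrow> pi_eq n (p + p') (q + q')"
  unfolding pi_eq_def using kideal.add by (fastforce simp: algebra_simps)

lemma pi_eq_neg_if: "pi_eq n p q \<Longrightarrow> pi_eq n (neg_if b p) (neg_if b q)"
  unfolding pi_eq_def using kideal_neg_if[of "p - q" n b] by (cases b) simp_all

lemma pi_eq_gen_tmul: "x \<in> qbasis n \<Longrightarrow> pi_eq n p q \<Longrightarrow> pi_eq n (gen x \<otimes> p) (gen x \<otimes> q)"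
  unfolding pi_eq_def using gen_tmul_in_kideal by (fastforce simp: tmul_diff_right)

lemma pi_eq_sum:
  "(\<And>i. i \<in> A \<Longrightarrow> pi_eq n (f i) (g i)) \<Longrightarrow> pi_eq n (\<Sum>i\<in>A. f i) (\<Sum>i\<in>A. g i)"
  unfolding pi_eq_def using kideal_sum[of A "\<lambda>i. f i - g i" n] by (simp add: sum_subtractf)

lemma pi_eq_tmul_lower_gen:
  assumes "1 \<le> k" "k < i" "i \<le> n" "W \<in> word_span n"
  shows "pi_eq n (W \<otimes> gen (qg t i k)) (if \<not> t \<and> i = k + 1 then W else 0)"
  using tmul_gen_minus_chi_in_kideal[of "qg t i k" n W] assms
  unfolding pi_eq_def chi_qg by (auto simp: tsc_def)

section \<open>The commutation relation for Sergeev's elements\<close>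

text \<open>
  This is [x_ab, X(m)_cd] = \<delta>_bc X(m)_ad - \<delta>_ad X(m)_cb (with super signs) for a \<noteq> d,
  where the second term vanishes; it holds modulo the defining relations alone.
\<close>

definition ser_commutation :: "nat \<Rightarrow> nat \<Rightarrow> bool" where
  "ser_commutation n m \<longleftrightarrow> (\<forall>u t a b c d. a \<in> {1..n} \<and> b \<in> {1..n} \<and> c \<in> {1..n} \<and> d \<in> {1..n} \<and> a \<noteq> d \<longrightarrow>
     pi_eq n (gen (qg u a b) \<otimes> ser n m (qg t c d))
       (neg_if (u \<and> t) (ser n m (qg t c d) \<otimes> gen (qg u a b))
        + (if b = c then neg_if (u \<and> even m) (ser n m (qg (u \<noteq> t) a d)) else 0)))"

lemma ser_commutationD:
  assumes "ser_commutation n m" "a \<in> {1..n}" "b \<in> {1..n}" "c \<in> {1..n}" "d \<in> {1..n}" "a \<noteq> d"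
  shows "pi_eq n (gen (qg u a b) \<otimes> ser n m (qg t c d))
       (neg_if (u \<and> t) (ser n m (qg t c d) \<otimes> gen (qg u a b))
        + (if b = c then neg_if (u \<and> even m) (ser n m (qg (u \<noteq> t) a d)) else 0))"
  using assms unfolding ser_commutation_def by blast

lemma ser_commutation_1: "ser_commutation n (Suc 0)"
  unfolding ser_commutation_def
proof (intro allI impI)
  fix u t a b c d
  assume h: "a \<in> {1..n} \<and> b \<in> {1..n} \<and> c \<in> {1..n} \<and> d \<in> {1..n} \<and> a \<noteq> d"
  then have K: "qrel (qg u a b) (qg t c d) \<otimes> mono [] \<in> kideal n"
    by (intro qrel_tmul_in_kideal word_span.mono) auto
  have eq: "gen (qg u a b) \<otimes> gen (qg t c d) - (neg_if (u \<and> t) (gen (qg t c d) \<otimes> gen (qg u a b))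
        + (if b = c then neg_if (u \<and> even (Suc 0)) (gen (qg (u \<noteq> t) a d)) else 0))
      = qrel (qg u a b) (qg t c d) \<otimes> mono []"
    unfolding gen_tmul_gen_eq_qrel[of u a b t c d] using h by simp
  show "pi_eq n (gen (qg u a b) \<otimes> ser n (Suc 0) (qg t c d))
       (neg_if (u \<and> t) (ser n (Suc 0) (qg t c d) \<otimes> gen (qg u a b))
        + (if b = c then neg_if (u \<and> even (Suc 0)) (ser n (Suc 0) (qg (u \<noteq> t) a d)) else 0))"
    unfolding pi_eq_def ser.simps(2) eq by (rule K)
qed

lemma ser_commutation_gen_tmul:
  assumes C: "ser_commutation n m" and m: "1 \<le> m"
    and r: "a \<in> {1..n}" "b \<in> {1..n}" "c \<in> {1..n}" "k \<in> {1..n}" "d \<in> {1..n}"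
    and ad: "a \<noteq> d"
  shows "pi_eq n (gen (qg u a b) \<otimes> (gen (qg v c k) \<otimes> ser n m (qg t k d)))
    (neg_if (u \<and> v) (neg_if (u \<and> t) ((gen (qg v c k) \<otimes> ser n m (qg t k d)) \<otimes> gen (qg u a b)))
    + (if b = k then neg_if (u \<and> v) (neg_if (u \<and> even m) (gen (qg v c k) \<otimes> ser n m (qg (u \<noteq> t) a d))) else 0)
    + (if b = c then gen (qg (u \<noteq> v) a k) \<otimes> ser n m (qg t k d) else 0)
    + (if k = a then neg_if (\<not> (u \<and> v)) (gen (qg (u \<noteq> v) c b) \<otimes> ser n m (qg t k d)) else 0))"
proof -
  define X where "X = gen (qg u a b)"
  define G where "G = gen (qg v c k)"
  define W where "W = ser n m (qg t k d)"
  define S where "S = ser n m (qg (u \<noteq> t) a d)"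
  define R where "R = neg_if (u \<and> t) (W \<otimes> X) + (if b = k then neg_if (u \<and> even m) S else 0)"
  have "X \<otimes> W - R \<in> kideal n"
    using ser_commutationD[OF C r(1,2,4,5) ad] unfolding pi_eq_def X_def W_def R_def S_def by simp
  then have K: "qrel (qg u a b) (qg v c k) \<otimes> W + neg_if (u \<and> v) (G \<otimes> (X \<otimes> W - R)) \<in> kideal n"
    using r m unfolding G_def W_def
    by (intro kideal.add qrel_tmul_in_kideal kideal_neg_if gen_tmul_in_kideal ser_in_word_span) auto
  have XGW: "X \<otimes> (G \<otimes> W) = qrel (qg u a b) (qg v c k) \<otimes> W + neg_if (u \<and> v) (G \<otimes> (X \<otimes> W))
     + (if b = c then gen (qg (u \<noteq> v) a k) \<otimes> W else 0)
     + (if k = a then neg_if (\<not> (u \<and> v)) (gen (qg (u \<noteq> v) c b) \<otimes> W) else 0)"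
    unfolding X_def G_def gen_tmul_assoc gen_tmul_gen_eq_qrel[of u a b v c k]
    by (simp only: gen_tmul_assoc tmul_add_left tmul_neg_if_left if_distrib[of "\<lambda>p. p \<otimes> W"]
        tmul_zero_left)
  have GXW: "G \<otimes> (X \<otimes> W) = G \<otimes> (X \<otimes> W - R) + neg_if (u \<and> t) ((G \<otimes> W) \<otimes> X)
     + (if b = k then neg_if (u \<and> even m) (G \<otimes> S) else 0)"
    unfolding R_def G_def
    by (simp only: tmul_diff_right tmul_add_right tmul_neg_if_right if_distrib[of "\<lambda>p. _ \<otimes> p"]
        tmul_zero_right gen_tmul_assoc diff_add_cancel add.assoc)
  show ?thesis
    using K unfolding pi_eq_def X_def[symmetric] G_def[symmetric] W_def[symmetric] S_def[symmetric]
    unfolding XGW GXW neg_if_add neg_if_if_0 by (simp add: algebra_simps)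
qed

lemma ser_commutation_gen_tmul_sum:
  assumes C: "ser_commutation n m" and m: "1 \<le> m"
    and r: "a \<in> {1..n}" "b \<in> {1..n}" "c \<in> {1..n}" "d \<in> {1..n}"
    and ad: "a \<noteq> d"
  shows "pi_eq n (gen (qg u a b) \<otimes> (\<Sum>k=1..n. gen (qg v c k) \<otimes> ser n m (qg t k d)))
    (neg_if (u \<and> v) (neg_if (u \<and> t) ((\<Sum>k=1..n. gen (qg v c k) \<otimes> ser n m (qg t k d)) \<otimes> gen (qg u a b)))
    + neg_if (u \<and> v) (neg_if (u \<and> even m) (gen (qg v c b) \<otimes> ser n m (qg (u \<noteq> t) a d)))
    + (if b = c then (\<Sum>k=1..n. gen (qg (u \<noteq> v) a k) \<otimes> ser n m (qg t k d)) else 0)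
    + neg_if (\<not> (u \<and> v)) (gen (qg (u \<noteq> v) c b) \<otimes> ser n m (qg t a d)))"
proof -
  have "pi_eq n (gen (qg u a b) \<otimes> (\<Sum>k=1..n. gen (qg v c k) \<otimes> ser n m (qg t k d)))
    (\<Sum>k=1..n. neg_if (u \<and> v) (neg_if (u \<and> t) ((gen (qg v c k) \<otimes> ser n m (qg t k d)) \<otimes> gen (qg u a b)))
    + (if b = k then neg_if (u \<and> v) (neg_if (u \<and> even m) (gen (qg v c k) \<otimes> ser n m (qg (u \<noteq> t) a d))) else 0)
    + (if b = c then gen (qg (u \<noteq> v) a k) \<otimes> ser n m (qg t k d) else 0)
    + (if k = a then neg_if (\<not> (u \<and> v)) (gen (qg (u \<noteq> v) c b) \<otimes> ser n m (qg t k d)) else 0))"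
    unfolding tmul_sum_right using r ad by (intro pi_eq_sum ser_commutation_gen_tmul[OF C m]) auto
  then show ?thesis
    using r by (cases "b = c") (simp_all add: sum.distrib neg_if_sum tmul_sum_left if_distrib[of "\<lambda>p. sum p _"])
qed

lemma ser_commutation_Suc:
  assumes C: "ser_commutation n m" and m: "1 \<le> m"
  shows "ser_commutation n (Suc m)"
  unfolding ser_commutation_def
proof (intro allI impI)
  fix u t a b c d
  assume h: "a \<in> {1..n} \<and> b \<in> {1..n} \<and> c \<in> {1..n} \<and> d \<in> {1..n} \<and> a \<noteq> d"
  define X where "X = gen (qg u a b)"
  define A where "A = (\<Sum>k=1..n. gen (qg False c k) \<otimes> ser n m (qg t k d))"
  define B where "B = (\<Sum>k=1..n. gen (qg True c k) \<otimes> ser n m (qg (\<not> t) k d))"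
  have Y: "ser n (Suc m) (qg t c d) = A + neg_if (odd m) B"
    unfolding A_def B_def by (rule ser_Suc_qg[OF m])
  have YS: "ser n (Suc m) (qg (u \<noteq> t) a d)
      = (\<Sum>k=1..n. gen (qg False a k) \<otimes> ser n m (qg (u \<noteq> t) k d))
        + neg_if (odd m) (\<Sum>k=1..n. gen (qg True a k) \<otimes> ser n m (qg (u = t) k d))"
    using ser_Suc_qg[OF m, of n "u \<noteq> t" a d] by simp
  from h have r: "a \<in> {1..n}" "b \<in> {1..n}" "c \<in> {1..n}" "d \<in> {1..n}" "a \<noteq> d"
    by auto
  note PA = ser_commutation_gen_tmul_sum[OF C m r, of u False t, folded A_def X_def, simplified]
  note PB = ser_commutation_gen_tmul_sum[OF C m r, of u True "\<not> t", folded B_def X_def, simplified]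
  show "pi_eq n (gen (qg u a b) \<otimes> ser n (Suc m) (qg t c d))
       (neg_if (u \<and> t) (ser n (Suc m) (qg t c d) \<otimes> gen (qg u a b))
        + (if b = c then neg_if (u \<and> even (Suc m)) (ser n (Suc m) (qg (u \<noteq> t) a d)) else 0))"
    using pi_eq_add[OF PA pi_eq_neg_if[OF PB, of "odd m"]]
    unfolding X_def[symmetric] Y YS tmul_add_right tmul_neg_if_right
    by (cases u; cases t; cases "even m"; cases "b = c")
      (simp_all add: tmul_add_left tmul_diff_left tmul_uminus_left algebra_simps cong: if_cong)
qed

lemma ser_commutation: "1 \<le> m \<Longrightarrow> ser_commutation n m"
  by (induct m rule: nat_induct_at_least) (auto intro: ser_commutation_1 ser_commutation_Suc)

section \<open>The first column of Sergeev's elements modulo \<open>I\<^sub>\<chi>\<close>\<close>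

text \<open>\<open>ser_col1_value t m i\<close> is \<open>\<pi>(ser n m (qg t i 1))\<close> for \<open>m \<le> i \<le> n\<close>; it does not depend on \<open>n\<close>.\<close>

definition ser_col1_value :: "bool \<Rightarrow> nat \<Rightarrow> nat \<Rightarrow> talg" where
  "ser_col1_value t m i =
    (if t then (if i = m then (\<Sum>j=1..m. neg_if (even j) (gen (F j j))) else 0)
     else (if i = m then (\<Sum>j=1..m. gen (E j j)) else if i = m + 1 then mono [] else 0))"

lemma ser_col1_value_above: "m < k \<Longrightarrow> ser_col1_value t m k = (if \<not> t \<and> k = m + 1 then mono [] else 0)"
  by (auto simp: ser_col1_value_def)

lemma pi_ser_1_col1:
  assumes "1 \<le> i" "i \<le> n"
  shows "pi_eq n (ser n 1 (qg t i 1)) (ser_col1_value t 1 i)"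
proof (cases "i = 1")
  case True
  then show ?thesis
    by (cases t) (simp_all add: ser_col1_value_def)
next
  case False
  then have "pi_eq n (mono [] \<otimes> gen (qg t i 1)) (if \<not> t \<and> i = 1 + 1 then mono [] else 0)"
    using assms by (intro pi_eq_tmul_lower_gen word_span.mono) auto
  then show ?thesis
    using False by (cases t) (auto simp: ser_col1_value_def)
qed

lemma pi_ser_Suc_lower_summand:
  assumes m: "1 \<le> m" and k: "1 \<le> k" "k < i" and i: "i \<le> n"
  shows "pi_eq n (gen (qg False i k) \<otimes> ser n m (qg t k 1)
                  + neg_if (odd m) (gen (qg True i k) \<otimes> ser n m (qg (\<not> t) k 1)))
     (if i = k + 1 then ser n m (qg t k 1) else 0)"
proof -
  define S where "S = ser n m (qg t i 1)"
  have C: "ser_commutation n m"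
    using ser_commutation[OF m] .
  have span: "ser n m (qg t' k 1) \<in> word_span n" for t'
    using m k i by (intro ser_in_word_span) auto
  have "pi_eq n (gen (qg False i k) \<otimes> ser n m (qg t k 1)) (ser n m (qg t k 1) \<otimes> gen (qg False i k) + S)"
    using ser_commutationD[OF C, of i k k 1 False t] k i unfolding S_def by simp
  moreover have "pi_eq n (ser n m (qg t k 1) \<otimes> gen (qg False i k)) (if i = k + 1 then ser n m (qg t k 1) else 0)"
    using pi_eq_tmul_lower_gen[OF k i span[of t], where t=False] by simp
  ultimately have even_part:
    "pi_eq n (gen (qg False i k) \<otimes> ser n m (qg t k 1)) ((if i = k + 1 then ser n m (qg t k 1) else 0) + S)"
    using pi_eq_trans pi_eq_add pi_eq_refl by blast
  have "pi_eq n (gen (qg True i k) \<otimes> ser n m (qg (\<not> t) k 1))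
      (neg_if (\<not> t) (ser n m (qg (\<not> t) k 1) \<otimes> gen (qg True i k)) + neg_if (even m) S)"
    using ser_commutationD[OF C, of i k k 1 True "\<not> t"] k i unfolding S_def by simp
  moreover have "pi_eq n (ser n m (qg (\<not> t) k 1) \<otimes> gen (qg True i k)) 0"
    using pi_eq_tmul_lower_gen[OF k i span[of "\<not> t"], where t=True] by simp
  ultimately have odd_part: "pi_eq n (gen (qg True i k) \<otimes> ser n m (qg (\<not> t) k 1)) (neg_if (even m) S)"
    using pi_eq_trans pi_eq_add[OF pi_eq_neg_if pi_eq_refl] by fastforce
  show ?thesis
    using pi_eq_add[OF even_part pi_eq_neg_if[OF odd_part, of "odd m"]] by (cases "even m") simp_all
qed

lemma pi_ser_Suc_col1:
  assumes m: "1 \<le> m" and mn: "Suc m \<le> n"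
    and IH: "\<And>t i. m \<le> i \<Longrightarrow> i \<le> n \<Longrightarrow> pi_eq n (ser n m (qg t i 1)) (ser_col1_value t m i)"
    and i: "Suc m \<le> i" "i \<le> n"
  shows "pi_eq n (ser n (Suc m) (qg t i 1)) (ser_col1_value t (Suc m) i)"
proof -
  define T where "T = (\<lambda>k. gen (qg False i k) \<otimes> ser n m (qg t k 1)
                          + neg_if (odd m) (gen (qg True i k) \<otimes> ser n m (qg (\<not> t) k 1)))"
  have "ser n (Suc m) (qg t i 1) = (\<Sum>k\<in>{1..n}. T k)"
    unfolding ser_Suc_qg[OF m] T_def sum.distrib neg_if_sum ..
  also have "\<dots> = (\<Sum>k\<in>{1..<i}. T k) + (\<Sum>k\<in>{i..n}. T k)"
    using i by (subst sum.union_disjoint[symmetric]) (auto intro: sum.cong)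
  finally have split: "ser n (Suc m) (qg t i 1) = (\<Sum>k\<in>{1..<i}. T k) + (\<Sum>k\<in>{i..n}. T k)" .
  have "pi_eq n (\<Sum>k\<in>{1..<i}. T k) (\<Sum>k\<in>{1..<i}. if i = k + 1 then ser n m (qg t k 1) else 0)"
    unfolding T_def using i m by (intro pi_eq_sum pi_ser_Suc_lower_summand) auto
  also have "(\<Sum>k\<in>{1..<i}. if i = k + 1 then ser n m (qg t k 1) else 0) = ser n m (qg t (i - 1) 1)"
    using i m by (subst sum.cong[where h="\<lambda>k. if k = i - 1 then ser n m (qg t k 1) else 0"]) auto
  finally have lower: "pi_eq n (\<Sum>k\<in>{1..<i}. T k) (ser_col1_value t m (i - 1))"
    using pi_eq_trans IH[of "i - 1" t] i by auto
  have "pi_eq n (\<Sum>k\<in>{i..n}. T k) (\<Sum>k\<in>{i..n}. gen (qg False i k) \<otimes> ser_col1_value t m k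
                                      + neg_if (odd m) (gen (qg True i k) \<otimes> ser_col1_value (\<not> t) m k))"
    unfolding T_def using i m by (intro pi_eq_sum pi_eq_add pi_eq_neg_if pi_eq_gen_tmul IH) auto
  also have "(\<Sum>k\<in>{i..n}. gen (qg False i k) \<otimes> ser_col1_value t m k
                          + neg_if (odd m) (gen (qg True i k) \<otimes> ser_col1_value (\<not> t) m k))
      = (\<Sum>k\<in>{i..n}. if k = m + 1 then (if t then neg_if (odd m) (gen (F i k)) else gen (E i k)) else 0)"
    using i by (intro sum.cong) (auto simp: ser_col1_value_above gen_tmul_mono gen_def)
  also have "\<dots> = (if i = m + 1 then (if t then neg_if (odd m) (gen (F i i)) else gen (E i i)) else 0)"
    using i mn by (auto simp: sum.delta')
  finally have upper: "pi_eq n (\<Sum>k\<in>{i..n}. T k)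
      (if i = m + 1 then (if t then neg_if (odd m) (gen (F i i)) else gen (E i i)) else 0)" .
  have "ser_col1_value t m (i - 1)
      + (if i = m + 1 then (if t then neg_if (odd m) (gen (F i i)) else gen (E i i)) else 0)
      = ser_col1_value t (Suc m) i"
    using i by (cases t) (auto simp: ser_col1_value_def)
  then show ?thesis
    using pi_eq_add[OF lower upper] unfolding split by simp
qed

lemma pi_ser_col1:
  assumes "1 \<le> m" "m \<le> i" "i \<le> n"
  shows "pi_eq n (ser n m (qg t i 1)) (ser_col1_value t m i)"
  using assms
proof (induct m arbitrary: t i rule: nat_induct_at_least)
  case base
  then show ?case
    using pi_ser_1_col1 by simp
next
  case (Suc m)
  then show ?case
    using pi_ser_Suc_col1[of m n] by simp
qed

theorem lemma4p6:
  fixes n :: nat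
  assumes "1 \<le> n"
  shows "pi_eq n (ser n n (E n 1)) (zel n) \<and> pi_eq n (ser n n (F n 1)) (H0 n)"
proof -
  have "ser_col1_value False n n = zel n"
    by (simp add: ser_col1_value_def zel_def)
  moreover have "ser_col1_value True n n = H0 n"
    unfolding ser_col1_value_def H0_def
    by (simp, rule sum.cong) (auto simp: tsc_minus_one_power)
  ultimately show ?thesis
    using pi_ser_col1[OF assms order.refl order.refl, where t=False]
      pi_ser_col1[OF assms order.refl order.refl, where t=True] by simp
qed

end
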